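(* Consider problem (VP) under the standing assumptions at $\bar x\in Q_0$. Suppose $\bar x$ is a local weak efficient solution of (VP) (in particular, this applies if $\bar x$ is a local efficient solution), and that the weak Abadie regularity condition holds at $\bar x$, i.e. $L(Q;\bar x)\subset T(Q_0;\bar x)$, where $L(Q;\bar x):=\{v\in X: f_i^{\circ}(\bar x,v)\leqq0\ \forall i\in I,\ g_j^{\circ}(\bar x,v)\leqq 0\ \forall j\in J(\bar x)\}$. Then there is no $u\in X$ with $f_i^{\circ}(\bar x,u)<0$ for all $i\in I$ and $g_j^{\circ}(\bar x,u)\leqq0$ for all $j\in J(\bar x)$.
   Context: Standing setting: $X$ is a Banach space; $I=\{1,\dots,p\}$, $J=\{1,\dots,m\}$; $f_i,g_j\colon X\to\mathbb{R}$; (VP) minimizes $f=(f_1,\dots,f_p)$ over $Q_0:=\{x\in X: g_j(x)\leqq 0,\ j\in J\}$. $J(\bar x):=\{j\in J: g_j(\bar x)=0\}$. Standing assumptions: $f_i$ ($i\in I$), $g_j$ ($j\in J(\bar x)$) locally Lipschitz at $\bar x$; $g_j$ ($j\notin J(\bar x)$) continuous at $\bar x$. $Q:=Q_0\cap\{x: f_i(x)\leqq f_i(\bar x),\ i\in I\}$. Clarke derivative: $F^{\circ}(\bar x,u):=\limsup_{x\to\bar x,\,t\downarrow0}\frac{F(x+tu)-F(x)}{t}$. Tangent cone: $T(\Omega;\bar x):=\{d:\exists t_k\downarrow0,\ \exists d^k\to d,\ \bar x+t_kd^k\in\Omega\ \forall k\}$. $\bar x\in Q_0$ is a local weak efficient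 solution if there is a neighborhood $U$ of $\bar x$ such that no $x\in U\cap Q_0$ satisfies $f_i(x)<f_i(\bar x)$ for all $i\in I$; it is a local efficient solution if no $x\in U\cap Q_0$ satisfies $f(x)\leqq f(\bar x)$ componentwise with $f(x)\neq f(\bar x)$. *)

theory Defs
  imports "HOL-Analysis.Analysis"
begin

definition clarke_dd :: "('a::real_normed_vector \<Rightarrow> real) \<Rightarrow> 'a \<Rightarrow> 'a \<Rightarrow> ereal" where
  "clarke_dd F xbar u =
     Limsup (nhds xbar \<times>\<^sub>F at_right (0::real))
       (\<lambda>(x, t). ereal ((F (x + t *\<^sub>R u) - F x) / t))"

definition tangent_cone :: "'a::real_normed_vector set \<Rightarrow> 'a \<Rightarrow> 'a set" where
  "tangent_cone \<Omega> xbar = {d. \<exists>t dd. (\<forall>k. t k > 0) \<and> t \<longlonglongrightarrow> 0 \<and>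
       dd \<longlonglongrightarrow> d \<and> (\<forall>k. xbar + t k *\<^sub>R dd k \<in> \<Omega>)}"

definition locally_lipschitz_at :: "('a::metric_space \<Rightarrow> real) \<Rightarrow> 'a \<Rightarrow> bool" where
  "locally_lipschitz_at F xbar \<longleftrightarrow>
     (\<exists>r>0. \<exists>L. \<forall>x\<in>ball xbar r. \<forall>y\<in>ball xbar r. \<bar>F x - F y\<bar> \<le> L * dist x y)"

definition feasible :: "nat \<Rightarrow> (nat \<Rightarrow> 'a \<Rightarrow> real) \<Rightarrow> 'a set" where
  "feasible m g = {x. \<forall>j\<in>{1..m}. g j x \<le> 0}"

definition active :: "nat \<Rightarrow> (nat \<Rightarrow> 'a \<Rightarrow> real) \<Rightarrow> 'a \<Rightarrow> nat set" where
  "active m g xbar = {j\<in>{1..m}. g j xbar = 0}"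

definition linearizing_cone ::
  "nat \<Rightarrow> nat \<Rightarrow> (nat \<Rightarrow> 'a::real_normed_vector \<Rightarrow> real) \<Rightarrow> (nat \<Rightarrow> 'a \<Rightarrow> real) \<Rightarrow> 'a \<Rightarrow> 'a set" where
  "linearizing_cone p m f g xbar = {v. (\<forall>i\<in>{1..p}. clarke_dd (f i) xbar v \<le> 0) \<and>
       (\<forall>j\<in>active m g xbar. clarke_dd (g j) xbar v \<le> 0)}"

definition local_weak_efficient ::
  "nat \<Rightarrow> nat \<Rightarrow> (nat \<Rightarrow> 'a::topological_space \<Rightarrow> real) \<Rightarrow> (nat \<Rightarrow> 'a \<Rightarrow> real) \<Rightarrow> 'a \<Rightarrow> bool" where
  "local_weak_efficient p m f g xbar \<longleftrightarrow> xbar \<in> feasible m g \<and>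
     (\<exists>U. open U \<and> xbar \<in> U \<and>
        \<not> (\<exists>x\<in>U \<inter> feasible m g. \<forall>i\<in>{1..p}. f i x < f i xbar))"

end

theory Submission
  imports Defs
begin

text \<open>Suppose some \<open>u\<close> had all \<open>f\<^sub>i\<^sup>\<circ>(x\<^sub>0, u) < 0\<close> and all active \<open>g\<^sub>j\<^sup>\<circ>(x\<^sub>0, u) \<le> 0\<close>. Then \<open>u\<close>
  lies in the linearizing cone, so by weak Abadie regularity there are \<open>t\<^sub>k \<down> 0\<close> and
  \<open>d\<^sub>k \<rightarrow> u\<close> with \<open>x\<^sub>0 + t\<^sub>k d\<^sub>k\<close> feasible. A negative Clarke derivative gives
  \<open>f\<^sub>i(x\<^sub>0 + t\<^sub>k u) < f\<^sub>i(x\<^sub>0) + c t\<^sub>k\<close> for some \<open>c < 0\<close>, and local Lipschitz continuity lets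
  us replace \<open>u\<close> by \<open>d\<^sub>k\<close> at a cost \<open>o(t\<^sub>k)\<close>. Hence eventually all \<open>f\<^sub>i\<close> decrease strictly
  at feasible points arbitrarily close to \<open>x\<^sub>0\<close>, contradicting local weak efficiency.\<close>

lemma tangent_sequence_tendsto:
  fixes xbar :: "'a::real_normed_vector"
  assumes "t \<longlonglongrightarrow> 0" and "dd \<longlonglongrightarrow> u"
  shows "(\<lambda>k. xbar + t k *\<^sub>R dd k) \<longlonglongrightarrow> xbar"
  using tendsto_add[OF tendsto_const tendsto_scaleR[OF assms]] by simp

lemma clarke_dd_less_imp_eventually_diff_less:
  fixes F :: "'a::real_normed_vector \<Rightarrow> real"
  assumes cd: "clarke_dd F xbar u < ereal c"
    and tpos: "\<forall>k. t k > 0" and t0: "t \<longlonglongrightarrow> 0"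
  shows "eventually (\<lambda>k. F (xbar + t k *\<^sub>R u) - F xbar < c * t k) sequentially"
proof -
  have ev: "eventually (\<lambda>(x, s). ereal ((F (x + s *\<^sub>R u) - F x) / s) < ereal c)
      (nhds xbar \<times>\<^sub>F at_right (0::real))"
    using Limsup_lessD[OF cd[unfolded clarke_dd_def]]
    by (simp add: case_prod_unfold del: less_ereal.simps)
  have "filterlim t (at_right 0) sequentially"
    using tendsto_imp_filterlim_at_right[OF t0] tpos by simp
  then have lim: "filterlim (\<lambda>k. (xbar, t k)) (nhds xbar \<times>\<^sub>F at_right 0) sequentially"
    by (intro filterlim_Pair) simp_all
  have "eventually (\<lambda>k. (F (xbar + t k *\<^sub>R u) - F xbar) / t k < c) sequentially"
    using filterlim_iff[THEN iffD1, OF lim, rule_format, OF ev] by simp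
  then show ?thesis
    by eventually_elim (use tpos in \<open>simp add: divide_less_eq\<close>)
qed

lemma locally_lipschitz_at_perturb_direction:
  fixes F :: "'a::real_normed_vector \<Rightarrow> real"
  assumes lip: "locally_lipschitz_at F xbar" and e: "e > 0"
    and tpos: "\<forall>k. t k > 0" and t0: "t \<longlonglongrightarrow> 0" and dd: "dd \<longlonglongrightarrow> u"
  shows "eventually (\<lambda>k. F (xbar + t k *\<^sub>R dd k) - F (xbar + t k *\<^sub>R u) < e * t k) sequentially"
proof -
  obtain r L where r: "r > 0"
    and L: "\<forall>x\<in>ball xbar r. \<forall>y\<in>ball xbar r. \<bar>F x - F y\<bar> \<le> L * dist x y"
    using lip unfolding locally_lipschitz_at_def by blast
  have near_u: "eventually (\<lambda>k. xbar + t k *\<^sub>R u \<in> ball xbar r) sequentially"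
    using topological_tendstoD[OF tangent_sequence_tendsto[OF t0 tendsto_const], of "ball xbar r"] r
    by simp
  have near_dd: "eventually (\<lambda>k. xbar + t k *\<^sub>R dd k \<in> ball xbar r) sequentially"
    using topological_tendstoD[OF tangent_sequence_tendsto[OF t0 dd], of "ball xbar r"] r by simp
  have "(\<lambda>k. dd k - u) \<longlonglongrightarrow> 0"
    using dd by (rule LIM_zero)
  then have "(\<lambda>k. \<bar>L\<bar> * norm (dd k - u)) \<longlonglongrightarrow> 0"
    by (intro tendsto_mult_right_zero tendsto_norm_zero)
  from order_tendstoD(2)[OF this e]
  have small: "eventually (\<lambda>k. \<bar>L\<bar> * norm (dd k - u) < e) sequentially" .
  show ?thesis
    using near_u near_dd small
  proof eventually_elim
    case (elim k)
    have tk: "t k > 0" using tpos by simp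
    have "dist (xbar + t k *\<^sub>R dd k) (xbar + t k *\<^sub>R u) = t k * norm (dd k - u)"
      using tk by (simp add: dist_norm scaleR_diff_right[symmetric])
    moreover have "\<bar>F (xbar + t k *\<^sub>R dd k) - F (xbar + t k *\<^sub>R u)\<bar>
        \<le> L * dist (xbar + t k *\<^sub>R dd k) (xbar + t k *\<^sub>R u)"
      using L elim by blast
    ultimately have "F (xbar + t k *\<^sub>R dd k) - F (xbar + t k *\<^sub>R u) \<le> L * (t k * norm (dd k - u))"
      by (metis abs_le_D1)
    also have "\<dots> \<le> t k * (\<bar>L\<bar> * norm (dd k - u))"
      using tk by (simp add: mult_right_mono)
    also have "\<dots> < t k * e"
      using elim tk by (intro mult_strict_left_mono) auto
    finally show ?case by (simp add: mult.commute)
  qed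
qed

lemma clarke_dd_neg_imp_eventually_descent:
  fixes F :: "'a::real_normed_vector \<Rightarrow> real"
  assumes lip: "locally_lipschitz_at F xbar" and cd: "clarke_dd F xbar u < 0"
    and tpos: "\<forall>k. t k > 0" and t0: "t \<longlonglongrightarrow> 0" and dd: "dd \<longlonglongrightarrow> u"
  shows "eventually (\<lambda>k. F (xbar + t k *\<^sub>R dd k) < F xbar) sequentially"
proof -
  obtain c where c: "clarke_dd F xbar u < ereal c" "ereal c < 0"
    using ereal_dense2[OF cd] by blast
  have "eventually (\<lambda>k. F (xbar + t k *\<^sub>R u) - F xbar < c * t k) sequentially"
    using clarke_dd_less_imp_eventually_diff_less[OF c(1) tpos t0] .
  moreover have "eventually (\<lambda>k. F (xbar + t k *\<^sub>R dd k) - F (xbar + t k *\<^sub>R u) < - c * t k)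
      sequentially"
    using c(2) by (intro locally_lipschitz_at_perturb_direction[OF lip _ tpos t0 dd]) simp
  ultimately show ?thesis
    by eventually_elim simp
qed

theorem theorem4p1:
  fixes f g :: "nat \<Rightarrow> 'a::banach \<Rightarrow> real" and p m :: nat and xbar :: 'a
  assumes "xbar \<in> feasible m g"
    and "\<forall>i\<in>{1..p}. locally_lipschitz_at (f i) xbar"
    and "\<forall>j\<in>active m g xbar. locally_lipschitz_at (g j) xbar"
    and "\<forall>j\<in>{1..m} - active m g xbar. isCont (g j) xbar"
    and "local_weak_efficient p m f g xbar"
    and "linearizing_cone p m f g xbar \<subseteq> tangent_cone (feasible m g) xbar"
  shows "\<not> (\<exists>u. (\<forall>i\<in>{1..p}. clarke_dd (f i) xbar u < 0) \<and>
                (\<forall>j\<in>active m g xbar. clarke_dd (g j) xbar u \<le> 0))"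
proof
  assume "\<exists>u. (\<forall>i\<in>{1..p}. clarke_dd (f i) xbar u < 0) \<and>
                (\<forall>j\<in>active m g xbar. clarke_dd (g j) xbar u \<le> 0)"
  then obtain u where f_neg: "\<forall>i\<in>{1..p}. clarke_dd (f i) xbar u < 0"
    and "\<forall>j\<in>active m g xbar. clarke_dd (g j) xbar u \<le> 0" by blast
  then have "u \<in> linearizing_cone p m f g xbar"
    unfolding linearizing_cone_def by (auto intro: less_imp_le)
  then have "u \<in> tangent_cone (feasible m g) xbar"
    using assms(6) by blast
  then obtain t dd where tpos: "\<forall>k. t k > 0" and t0: "t \<longlonglongrightarrow> 0" and dd: "dd \<longlonglongrightarrow> u"
    and feas: "\<forall>k. xbar + t k *\<^sub>R dd k \<in> feasible m g"
    unfolding tangent_cone_def by blast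
  obtain U where U: "open U" "xbar \<in> U"
    and no_descent: "\<not> (\<exists>x\<in>U \<inter> feasible m g. \<forall>i\<in>{1..p}. f i x < f i xbar)"
    using assms(5) unfolding local_weak_efficient_def by blast
  have near: "eventually (\<lambda>k. xbar + t k *\<^sub>R dd k \<in> U) sequentially"
    using topological_tendstoD[OF tangent_sequence_tendsto[OF t0 dd] U] .
  have "\<forall>i\<in>{1..p}. eventually (\<lambda>k. f i (xbar + t k *\<^sub>R dd k) < f i xbar) sequentially"
    using assms(2) f_neg clarke_dd_neg_imp_eventually_descent[OF _ _ tpos t0 dd] by simp
  then have descent:
    "eventually (\<lambda>k. \<forall>i\<in>{1..p}. f i (xbar + t k *\<^sub>R dd k) < f i xbar) sequentially"
    by (intro eventually_ball_finite) simp_all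
  obtain k where "xbar + t k *\<^sub>R dd k \<in> U"
    "\<forall>i\<in>{1..p}. f i (xbar + t k *\<^sub>R dd k) < f i xbar"
    using eventually_happens[OF eventually_conj[OF near descent]] by auto
  then show False using no_descent feas by blast
qed

end
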